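(* Every latent information prior (i.e. every Borel probability measure $\pi$ on $[0,1]$ maximizing $I(\pi)$ over all Borel probability measures on $[0,1]$) is a discrete distribution whose support consists of at most four points.
   Context: Bernoulli model: for $\theta\in[0,1]$, $p_\theta(x)=\theta^x(1-\theta)^{1-x}$, $x\in\{0,1\}$. One observes $x\sim p_\theta$ and predicts an independent future $y\sim p_\theta$. A nonrandomized decision is a pair $\delta=(\delta_0,\delta_1)\in\mathcal D=[0,1]^2$, used as the predictive distribution $p_\delta(y\mid x)=\delta_x^{\,y}(1-\delta_x)^{1-y}$. The Kullback–Leibler risk is $R_\delta(\theta)=-S(\theta)+\theta^2\log\frac1{\delta_1}+\theta(1-\theta)\log\frac1{1-\delta_1}+\theta(1-\theta)\log\frac1{\delta_0}+(1-\theta)^2\log\frac1{1-\delta_0}\in[0,+\infty]$, where $S(\theta)=-\theta\log\theta-(1-\theta)\log(1-\theta)$ is the binary entropy, with conventions $0\log 0=0$, $\log(1/0)=+\infty$, $0\cdot(+\infty)=0$. A prior is a Borel probability measure $\pi$ on $[0,1]$. The conditional mutual information of $\theta$ and $y$ given $x$ under $\pi$ is $I(\pi)=\min_{\delta\in\mathcal D}\int_{[0,1]}R_\delta(\theta)\,\pi(d\theta)$, i.e. the Bayes risk of the Bayesian predictive distribution $p_\pi(y\mid x)=\int p_\theta(y)p_\theta(x)\pi(d\theta)/\int p_\theta(x)\pi(d\theta)$. A latent information prior is a prior maximizing $I$ over all priors. *)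

theory Defs
  imports "HOL-Probability.Probability"
begin

definition bin_entropy :: "real \<Rightarrow> real" where
  "bin_entropy t = - (if t = 0 then 0 else t * ln t)
                   - (if t = 1 then 0 else (1 - t) * ln (1 - t))"

definition wlog_inv :: "real \<Rightarrow> real \<Rightarrow> ereal" where
  "wlog_inv c d = (if c = 0 then 0 else if d = 0 then \<infinity> else ereal (c * ln (1 / d)))"

definition KL_risk :: "real \<times> real \<Rightarrow> real \<Rightarrow> ereal" where
  "KL_risk \<delta> t = ereal (- bin_entropy t)
      + wlog_inv (t^2) (snd \<delta>) + wlog_inv (t * (1 - t)) (1 - snd \<delta>)
      + wlog_inv (t * (1 - t)) (fst \<delta>) + wlog_inv ((1 - t)^2) (1 - fst \<delta>)"

definition decisions :: "(real \<times> real) set" where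
  "decisions = {0..1} \<times> {0..1}"

text \<open>A prior: a Borel probability measure on [0,1], represented as a Borel
  probability measure on the real line giving full mass to [0,1].\<close>
definition is_prior :: "real measure \<Rightarrow> bool" where
  "is_prior M \<longleftrightarrow> sets M = sets borel \<and> prob_space M \<and> emeasure M {0..1} = 1"

text \<open>Bayes risk of a decision under a prior (the risk is nonnegative, so
  the conversion to ennreal is lossless).\<close>
definition bayes_risk :: "real measure \<Rightarrow> real \<times> real \<Rightarrow> ennreal" where
  "bayes_risk M \<delta> = (\<integral>\<^sup>+ t. e2ennreal (KL_risk \<delta> t) \<partial>M)"

definition cond_mutual_info :: "real measure \<Rightarrow> ennreal" where
  "cond_mutual_info M = (INF \<delta>\<in>decisions. bayes_risk M \<delta>)"

definition latent_information_prior :: "real measure \<Rightarrow> bool" where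
  "latent_information_prior M \<longleftrightarrow> is_prior M \<and>
     (\<forall>M'. is_prior M' \<longrightarrow> cond_mutual_info M' \<le> cond_mutual_info M)"

end

theory Submission
  imports Defs
begin

text \<open>A prior carried by \<open>{0, 1}\<close> is trivially fine. Otherwise the joint probabilities of
  \<open>(x, y)\<close> are all positive, the Bayes decision is the interior point given by the Bayesian
  predictive probabilities, and \<open>I(\<pi>)\<close> is the integral of its risk \<open>g\<close>. Mixing a small point
  mass at \<open>t\<close> into a latent information prior cannot increase \<open>I\<close>; letting the weight tend to
  zero gives \<open>g(t) \<le> I(\<pi>)\<close> for every \<open>t\<close>, so the prior lives where \<open>g\<close> attains its maximum.
  On \<open>(0, 1)\<close> the second derivative of \<open>g\<close> is \<open>1 / (t (1 - t))\<close> plus a constant, which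
  vanishes at most twice, so by Rolle's theorem \<open>g\<close> has at most two interior maximizers; with
  the endpoints this gives at most four points.\<close>

section \<open>Entropy inequalities\<close>

lemma bin_entropy_nonneg:
  assumes "0 \<le> t" "t \<le> 1"
  shows "0 \<le> bin_entropy t"
proof -
  have "t * ln t \<le> 0" "(1 - t) * ln (1 - t) \<le> 0"
    using assms by (cases "t = 0"; cases "t = 1"; auto intro!: mult_nonneg_nonpos)+
  then show ?thesis by (simp add: bin_entropy_def)
qed

lemma bin_entropy_le_1:
  assumes "0 \<le> t" "t \<le> 1"
  shows "bin_entropy t \<le> 1"
proof -
  have xlnx: "- (if x = 0 then 0 else x * ln x) \<le> 1 - x" if "0 \<le> x" for x :: real
  proof (cases "x = 0")
    case False
    then have "ln (1 / x) \<le> 1 / x - 1" using that by (intro ln_le_minus_one) auto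
    then have "x * ln (1 / x) \<le> x * (1 / x - 1)" using that by (intro mult_left_mono) auto
    then show ?thesis using False by (simp add: ln_div algebra_simps)
  qed simp
  show ?thesis
    using xlnx[of t] xlnx[of "1 - t"] assms by (simp add: bin_entropy_def)
qed

lemma bin_entropy_measurable [measurable]: "bin_entropy \<in> borel_measurable borel"
  unfolding bin_entropy_def by measurable

lemma weighted_ln_le_neg_bin_entropy:
  fixes p x :: real
  assumes "0 \<le> p" "p \<le> 1" "0 < x" "x < 1"
  shows "p * ln x + (1 - p) * ln (1 - x) \<le> - bin_entropy p"
proof (cases "p = 0 \<or> p = 1")
  case True
  then show ?thesis using assms by (auto simp: bin_entropy_def)
next
  case False
  then have p: "0 < p" "p < 1" using assms by auto
  have "p * ln (x / p) \<le> p * (x / p - 1)"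
    using p assms by (intro mult_left_mono ln_le_minus_one) auto
  moreover have "(1 - p) * ln ((1 - x) / (1 - p)) \<le> (1 - p) * ((1 - x) / (1 - p) - 1)"
    using p assms by (intro mult_left_mono ln_le_minus_one) auto
  moreover have "p * (x / p - 1) + (1 - p) * ((1 - x) / (1 - p) - 1) = 0"
    using p by (simp add: field_simps)
  ultimately show ?thesis using p assms by (simp add: bin_entropy_def ln_div algebra_simps)
qed

lemma weighted_ln_le_at_ratio:
  fixes a b x :: real
  assumes "0 < a" "0 < b" "0 < x" "x < 1"
  shows "a * ln x + b * ln (1 - x) \<le> a * ln (a / (a + b)) + b * ln (1 - a / (a + b))"
proof -
  define p where "p = a / (a + b)"
  have p: "0 < p" "p < 1" using assms by (auto simp: p_def field_simps)
  have "(a + b) * p = a" "(a + b) * (1 - p) = b"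
    using assms by (simp_all add: p_def field_simps)
  then have split: "(a + b) * (p * X + (1 - p) * Y) = a * X + b * Y" for X Y
    by (metis distrib_left mult.assoc)
  have "a * ln x + b * ln (1 - x) = (a + b) * (p * ln x + (1 - p) * ln (1 - x))"
    by (rule split[symmetric])
  also have "\<dots> \<le> (a + b) * (- bin_entropy p)"
    using weighted_ln_le_neg_bin_entropy[of p x] assms p by (intro mult_left_mono) auto
  also have "\<dots> = a * ln p + b * ln (1 - p)"
    using p split[of "ln p" "ln (1 - p)"] by (simp add: bin_entropy_def add.commute)
  finally show ?thesis by (simp add: p_def)
qed

section \<open>The risk of a decision\<close>

definition risk :: "real \<times> real \<Rightarrow> real \<Rightarrow> real" where
  "risk \<delta> t = - bin_entropy t - t^2 * ln (snd \<delta>) - t * (1 - t) * ln (1 - snd \<delta>)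
      - t * (1 - t) * ln (fst \<delta>) - (1 - t)^2 * ln (1 - fst \<delta>)"

definition interior_decision :: "real \<times> real \<Rightarrow> bool" where
  "interior_decision \<delta> \<longleftrightarrow> fst \<delta> \<in> {0<..<1} \<and> snd \<delta> \<in> {0<..<1}"

lemma interior_decision_in_decisions: "interior_decision \<delta> \<Longrightarrow> \<delta> \<in> decisions"
  by (auto simp: interior_decision_def decisions_def mem_Times_iff less_imp_le)

lemma risk_measurable [measurable]: "risk \<delta> \<in> borel_measurable borel"
  unfolding risk_def by measurable

lemma KL_risk_interior:
  assumes "interior_decision \<delta>"
  shows "KL_risk \<delta> t = ereal (risk \<delta> t)"
  using assms by (simp add: interior_decision_def KL_risk_def wlog_inv_def risk_def ln_div)

lemma risk_nonneg:
  assumes "interior_decision \<delta>" "0 \<le> t" "t \<le> 1"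
  shows "0 \<le> risk \<delta> t"
proof -
  have "t * (t * ln (snd \<delta>) + (1 - t) * ln (1 - snd \<delta>)) \<le> t * (- bin_entropy t)"
    "(1 - t) * (t * ln (fst \<delta>) + (1 - t) * ln (1 - fst \<delta>)) \<le> (1 - t) * (- bin_entropy t)"
    using assms by (intro mult_left_mono weighted_ln_le_neg_bin_entropy; simp add: interior_decision_def)+
  then show ?thesis unfolding risk_def by (simp add: algebra_simps power2_eq_square)
qed

lemma abs_risk_le:
  assumes "0 \<le> t" "t \<le> 1"
  shows "\<bar>risk \<delta> t\<bar> \<le> 1 + \<bar>ln (snd \<delta>)\<bar> + \<bar>ln (1 - snd \<delta>)\<bar> + \<bar>ln (fst \<delta>)\<bar> + \<bar>ln (1 - fst \<delta>)\<bar>"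
proof -
  have weight: "\<bar>c * l\<bar> \<le> \<bar>l\<bar>" if "0 \<le> c" "c \<le> 1" for c l :: real
    using that by (simp add: abs_mult mult_left_le_one_le)
  have "\<bar>t^2 * ln (snd \<delta>)\<bar> \<le> \<bar>ln (snd \<delta>)\<bar>" "\<bar>t * (1 - t) * ln (1 - snd \<delta>)\<bar> \<le> \<bar>ln (1 - snd \<delta>)\<bar>"
    "\<bar>t * (1 - t) * ln (fst \<delta>)\<bar> \<le> \<bar>ln (fst \<delta>)\<bar>" "\<bar>(1 - t)^2 * ln (1 - fst \<delta>)\<bar> \<le> \<bar>ln (1 - fst \<delta>)\<bar>"
    using assms by (auto intro!: weight simp: power_le_one mult_le_one)
  then show ?thesis
    using bin_entropy_nonneg[OF assms] bin_entropy_le_1[OF assms]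
    unfolding risk_def abs_le_iff by (intro conjI; linarith)
qed

lemma KL_risk_boundary_infinite:
  assumes "\<delta> \<in> decisions" "0 \<le> t" "t \<le> 1"
    and "(snd \<delta> = 0 \<and> t \<noteq> 0) \<or> (snd \<delta> = 1 \<and> t \<in> {0<..<1})
       \<or> (fst \<delta> = 0 \<and> t \<in> {0<..<1}) \<or> (fst \<delta> = 1 \<and> t \<noteq> 1)"
  shows "KL_risk \<delta> t = \<infinity>"
proof -
  have nonneg: "0 \<le> wlog_inv c d" if "0 \<le> c" "0 \<le> d" "d \<le> 1" for c d
    using that by (auto simp: wlog_inv_def ln_div intro!: mult_nonneg_nonpos)
  define w1 w2 w3 w4 where "w1 = wlog_inv (t^2) (snd \<delta>)"
    and "w2 = wlog_inv (t * (1 - t)) (1 - snd \<delta>)" and "w3 = wlog_inv (t * (1 - t)) (fst \<delta>)"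
    and "w4 = wlog_inv ((1 - t)^2) (1 - fst \<delta>)"
  have "0 \<le> w1" "0 \<le> w2" "0 \<le> w3" "0 \<le> w4"
    using assms(1-3) by (auto simp: w1_def w2_def w3_def w4_def decisions_def intro!: nonneg)
  moreover have "w1 = \<infinity> \<or> w2 = \<infinity> \<or> w3 = \<infinity> \<or> w4 = \<infinity>"
    using assms(4) by (auto simp: w1_def w2_def w3_def w4_def wlog_inv_def)
  ultimately have "ereal (- bin_entropy t) + w1 + w2 + w3 + w4 = \<infinity>"
    by (cases w1; cases w2; cases w3; cases w4) auto
  then show ?thesis by (simp add: KL_risk_def w1_def w2_def w3_def w4_def)
qed

section \<open>Priors and the Bayes decision\<close>

lemma is_priorD:
  assumes "is_prior M"
  shows "prob_space M" "sets M = sets borel" "AE t in M. t \<in> {0..1}"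
proof -
  show "prob_space M" "sets M = sets borel" using assms by (auto simp: is_prior_def)
  then show "AE t in M. t \<in> {0..1}"
    using assms by (intro prob_space.AE_prob_1) (auto simp: is_prior_def measure_def)
qed

lemma measurable_prior:
  "is_prior M \<Longrightarrow> f \<in> borel_measurable borel \<Longrightarrow> f \<in> borel_measurable M"
  using is_priorD(2) measurable_cong_sets by blast

lemma integrable_prior_bounded:
  fixes f :: "real \<Rightarrow> real"
  assumes M: "is_prior M" and f: "f \<in> borel_measurable borel"
    and bound: "\<And>t. t \<in> {0..1} \<Longrightarrow> \<bar>f t\<bar> \<le> C"
  shows "integrable M f"
proof -
  interpret prob_space M using is_priorD[OF M] by simp
  show ?thesis
    using is_priorD(3)[OF M] measurable_prior[OF M f]
    by (intro integrable_const_bound[where B = C]) (auto elim!: AE_mp simp: bound)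
qed

text \<open>The joint probabilities of \<open>(x, y) = (1, 1)\<close>, \<open>(1, 0)\<close> (equal to that of \<open>(0, 1)\<close>)
  and \<open>(0, 0)\<close> under a prior; the Bayes risk depends on the prior only through them
  and the mean entropy.\<close>
definition prob11 :: "real measure \<Rightarrow> real" where "prob11 M = (\<integral>t. t^2 \<partial>M)"
definition prob10 :: "real measure \<Rightarrow> real" where "prob10 M = (\<integral>t. t * (1 - t) \<partial>M)"
definition prob00 :: "real measure \<Rightarrow> real" where "prob00 M = (\<integral>t. (1 - t)^2 \<partial>M)"
definition mean_entropy :: "real measure \<Rightarrow> real" where "mean_entropy M = (\<integral>t. bin_entropy t \<partial>M)"

lemma integrable_moments:
  assumes "is_prior M"
  shows "integrable M (\<lambda>t. t^2)" "integrable M (\<lambda>t. t * (1 - t))"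
    "integrable M (\<lambda>t. (1 - t)^2)" "integrable M bin_entropy"
  by (rule integrable_prior_bounded[OF assms, where C = 1];
      auto simp: abs_mult power_le_one abs_square_le_1 bin_entropy_nonneg bin_entropy_le_1
           intro!: mult_le_one)+

lemma integrable_risk: "is_prior M \<Longrightarrow> integrable M (risk \<delta>)"
  using integrable_moments unfolding risk_def[abs_def] by (intro Bochner_Integration.integrable_diff integrable_minus integrable_mult_left) auto

lemma integral_risk:
  assumes "is_prior M"
  shows "(\<integral>t. risk \<delta> t \<partial>M) = - mean_entropy M - prob11 M * ln (snd \<delta>)
    - prob10 M * (ln (1 - snd \<delta>) + ln (fst \<delta>)) - prob00 M * ln (1 - fst \<delta>)"
  using integrable_moments[OF assms]
  by (simp add: risk_def prob11_def prob10_def prob00_def mean_entropy_def distrib_left)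

lemma bayes_risk_interior:
  assumes M: "is_prior M" and \<delta>: "interior_decision \<delta>"
  shows "bayes_risk M \<delta> = ennreal (\<integral>t. risk \<delta> t \<partial>M)" "0 \<le> (\<integral>t. risk \<delta> t \<partial>M)"
proof -
  have nonneg: "AE t in M. 0 \<le> risk \<delta> t"
    using is_priorD(3)[OF M] by (rule AE_mp) (auto intro!: risk_nonneg \<delta>)
  show "bayes_risk M \<delta> = ennreal (\<integral>t. risk \<delta> t \<partial>M)"
    using \<delta> by (simp add: bayes_risk_def KL_risk_interior nn_integral_eq_integral integrable_risk M nonneg)
  show "0 \<le> (\<integral>t. risk \<delta> t \<partial>M)" using nonneg by (rule integral_nonneg_AE)
qed

lemma integral_eq_0_iff_AE_prior:
  fixes f :: "real \<Rightarrow> real"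
  assumes M: "is_prior M" and f: "f \<in> borel_measurable borel"
    and bound: "\<And>t. t \<in> {0..1} \<Longrightarrow> 0 \<le> f t \<and> f t \<le> C"
  shows "(\<integral>t. f t \<partial>M) = 0 \<longleftrightarrow> (AE t in M. f t = 0)"
proof -
  have "integrable M f"
    using bound by (intro integrable_prior_bounded[OF M f, of C]) force
  moreover have "AE t in M. 0 \<le> f t"
    using is_priorD(3)[OF M] by (rule AE_mp) (use bound in auto)
  ultimately show ?thesis by (rule integral_nonneg_eq_0_iff_AE)
qed

lemma prob10_eq_0_iff:
  assumes M: "is_prior M"
  shows "prob10 M = 0 \<longleftrightarrow> (AE t in M. t \<in> {0, 1})"
proof -
  have "prob10 M = 0 \<longleftrightarrow> (AE t in M. t * (1 - t) = 0)"
    unfolding prob10_def by (rule integral_eq_0_iff_AE_prior[OF M, where C = 1]) (auto intro: mult_le_one)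
  also have "\<dots> \<longleftrightarrow> (AE t in M. t \<in> {0, 1})"
    by (rule AE_cong) auto
  finally show ?thesis .
qed

lemma moments_pos:
  assumes M: "is_prior M" and "prob10 M \<noteq> 0"
  shows "0 < prob11 M" "0 < prob10 M" "0 < prob00 M"
proof -
  have no_endpoints: "\<not> (AE t in M. t \<in> {0, 1})" using assms prob10_eq_0_iff by force
  have "prob11 M = 0 \<longleftrightarrow> (AE t in M. t^2 = 0)" "prob00 M = 0 \<longleftrightarrow> (AE t in M. (1 - t)^2 = 0)"
    unfolding prob11_def prob00_def
    by (rule integral_eq_0_iff_AE_prior[OF M, where C = 1]; auto simp: power_le_one)+
  moreover have "AE t in M. t^2 = 0 \<Longrightarrow> AE t in M. t \<in> {0, 1}"
    "AE t in M. (1 - t)^2 = 0 \<Longrightarrow> AE t in M. t \<in> {0, 1}"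
    by (auto elim!: AE_mp)
  moreover have "0 \<le> prob11 M" "0 \<le> prob00 M" "0 \<le> prob10 M"
    unfolding prob11_def prob00_def prob10_def
    using is_priorD(3)[OF M] by (auto intro!: integral_nonneg_AE elim!: AE_mp)
  ultimately show "0 < prob11 M" "0 < prob10 M" "0 < prob00 M"
    using no_endpoints assms(2) by force+
qed

lemma emeasure_nonzero_if_integral_nonzero:
  assumes M: "is_prior M" and A: "A \<in> sets borel" and f: "f \<in> borel_measurable borel"
    and vanish: "\<And>t. t \<in> {0..1} - A \<Longrightarrow> f t = 0" and "(\<integral>t. f t \<partial>M) \<noteq> 0"
  shows "emeasure M A \<noteq> 0"
proof
  assume "emeasure M A = 0"
  then have "AE t in M. t \<notin> A"
    using A is_priorD(2)[OF M] by (intro AE_I'[of A]) auto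
  with is_priorD(3)[OF M] have "AE t in M. f t = 0"
    by eventually_elim (use vanish in auto)
  then have "(\<integral>t. f t \<partial>M) = 0"
    using integral_cong_AE[of f M "\<lambda>_. 0"] measurable_prior[OF M f] by simp
  with assms(5) show False ..
qed

lemma bayes_risk_infinite:
  assumes M: "is_prior M" and A: "A \<in> sets borel" "emeasure M A \<noteq> 0"
    and inf: "\<And>t. t \<in> A \<Longrightarrow> KL_risk \<delta> t = \<infinity>"
  shows "bayes_risk M \<delta> = \<infinity>"
proof -
  have "(\<integral>\<^sup>+t. \<infinity> * indicator A t \<partial>M) \<le> bayes_risk M \<delta>"
    unfolding bayes_risk_def by (intro nn_integral_mono) (auto simp: inf split: split_indicator)
  moreover have "(\<integral>\<^sup>+t. \<infinity> * indicator A t \<partial>M) = \<infinity>"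
    using A is_priorD(2)[OF M] by (simp add: nn_integral_cmult_indicator ennreal_mult_top)
  ultimately show ?thesis by (simp add: top_unique)
qed

text \<open>The Bayesian predictive probabilities of \<open>y = 1\<close> given \<open>x = 0\<close> and given \<open>x = 1\<close>.\<close>
definition bayes_decision :: "real measure \<Rightarrow> real \<times> real" where
  "bayes_decision M = (prob10 M / (prob10 M + prob00 M), prob11 M / (prob11 M + prob10 M))"

lemma interior_bayes_decision:
  "0 < prob11 M \<Longrightarrow> 0 < prob10 M \<Longrightarrow> 0 < prob00 M \<Longrightarrow> interior_decision (bayes_decision M)"
  by (simp add: interior_decision_def bayes_decision_def field_simps)

lemma bayes_risk_boundary_infinite:
  assumes M: "is_prior M" and pos: "0 < prob11 M" "0 < prob10 M" "0 < prob00 M"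
    and \<delta>: "\<delta> \<in> decisions" "\<not> interior_decision \<delta>"
  shows "bayes_risk M \<delta> = \<infinity>"
proof -
  have mass: "emeasure M A \<noteq> 0" if "A \<in> sets borel" "\<forall>t \<in> {0..1} - A. f t = 0"
    "f \<in> borel_measurable borel" "(\<integral>t. f t \<partial>M) \<noteq> 0" for A f
    using emeasure_nonzero_if_integral_nonzero[OF M] that by blast
  have infinite_on: "bayes_risk M \<delta> = \<infinity>"
    if "A \<in> sets borel" "A \<subseteq> {0..1}" "emeasure M A \<noteq> 0" "\<forall>t\<in>A. KL_risk \<delta> t = \<infinity>" for A
    using bayes_risk_infinite[OF M] that by blast
  consider "snd \<delta> = 0" | "snd \<delta> = 1 \<or> fst \<delta> = 0" | "fst \<delta> = 1"
    using \<delta> by (force simp: decisions_def interior_decision_def)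
  then show ?thesis
  proof cases
    case 1
    have "emeasure M {0<..1} \<noteq> 0"
      using pos by (intro mass[of _ "\<lambda>t. t^2"]) (auto simp: prob11_def)
    with 1 show ?thesis using \<delta>(1) by (intro infinite_on) (auto intro!: KL_risk_boundary_infinite)
  next
    case 2
    have "emeasure M {0<..<1} \<noteq> 0"
      using pos by (intro mass[of _ "\<lambda>t. t * (1 - t)"]) (auto simp: prob10_def)
    with 2 show ?thesis using \<delta>(1) by (intro infinite_on) (auto intro!: KL_risk_boundary_infinite)
  next
    case 3
    have "emeasure M {0..<1} \<noteq> 0"
      using pos by (intro mass[of _ "\<lambda>t. (1 - t)^2"]) (auto simp: prob00_def)
    with 3 show ?thesis using \<delta>(1) by (intro infinite_on) (auto intro!: KL_risk_boundary_infinite)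
  qed
qed

lemma bayes_risk_bayes_decision_le:
  assumes M: "is_prior M" and pos: "0 < prob11 M" "0 < prob10 M" "0 < prob00 M"
    and \<delta>: "\<delta> \<in> decisions"
  shows "bayes_risk M (bayes_decision M) \<le> bayes_risk M \<delta>"
proof (cases "interior_decision \<delta>")
  case True
  have "prob11 M * ln (snd \<delta>) + prob10 M * ln (1 - snd \<delta>)
      \<le> prob11 M * ln (snd (bayes_decision M)) + prob10 M * ln (1 - snd (bayes_decision M))"
    "prob10 M * ln (fst \<delta>) + prob00 M * ln (1 - fst \<delta>)
      \<le> prob10 M * ln (fst (bayes_decision M)) + prob00 M * ln (1 - fst (bayes_decision M))"
    using True pos
    by (auto simp: bayes_decision_def interior_decision_def intro!: weighted_ln_le_at_ratio)
  then have "(\<integral>t. risk (bayes_decision M) t \<partial>M) \<le> (\<integral>t. risk \<delta> t \<partial>M)"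
    by (simp add: integral_risk[OF M] distrib_left)
  then show ?thesis
    using True interior_bayes_decision[OF pos] by (simp add: bayes_risk_interior[OF M] ennreal_leI)
next
  case False
  then show ?thesis using bayes_risk_boundary_infinite[OF M pos \<delta>] by simp
qed

lemma cond_mutual_info_eq_bayes_decision:
  assumes M: "is_prior M" and pos: "0 < prob11 M" "0 < prob10 M" "0 < prob00 M"
  shows "cond_mutual_info M = ennreal (\<integral>t. risk (bayes_decision M) t \<partial>M)"
proof -
  have "bayes_decision M \<in> decisions"
    by (rule interior_decision_in_decisions[OF interior_bayes_decision[OF pos]])
  then have "cond_mutual_info M = bayes_risk M (bayes_decision M)"
    unfolding cond_mutual_info_def
    by (intro antisym INF_lower INF_greatest bayes_risk_bayes_decision_le[OF M pos])
  then show ?thesis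
    using bayes_risk_interior(1)[OF M interior_bayes_decision[OF pos]] by simp
qed

section \<open>Perturbing by a point mass\<close>

text \<open>The mixture \<open>e \<delta>\<^sub>t\<^sub>0 + (1 - e) M\<close>, drawn by first tossing an \<open>e\<close>-coin.\<close>
definition mix_point :: "real \<Rightarrow> real \<Rightarrow> real measure \<Rightarrow> real measure" where
  "mix_point e t0 M = measure_pmf (bernoulli_pmf e) \<bind> (\<lambda>b. if b then return borel t0 else M)"

lemma mix_point_kernel_measurable:
  assumes "is_prior M"
  shows "(\<lambda>b. if b then return borel t0 else M) \<in> measurable (measure_pmf (bernoulli_pmf e)) (subprob_algebra borel)"
  using is_priorD[OF assms]
  by (auto simp: space_subprob_algebra prob_space_imp_subprob_space prob_space_return)

lemma sets_mix_point: "is_prior M \<Longrightarrow> sets (mix_point e t0 M) = sets borel"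
  unfolding mix_point_def by (subst sets_bind[where N = borel]) (auto simp: is_priorD)

lemma nn_integral_mix_point:
  assumes M: "is_prior M" and e: "e \<in> {0..1}" and f: "f \<in> borel_measurable borel"
  shows "(\<integral>\<^sup>+t. f t \<partial>mix_point e t0 M) = f t0 * ennreal e + (\<integral>\<^sup>+t. f t \<partial>M) * ennreal (1 - e)"
  unfolding mix_point_def using e f
  by (simp add: nn_integral_bind[OF f mix_point_kernel_measurable[OF M]] nn_integral_return)

lemma is_prior_mix_point:
  assumes M: "is_prior M" and e: "e \<in> {0..1}" and t0: "t0 \<in> {0..1}"
  shows "is_prior (mix_point e t0 M)"
proof -
  have sets: "sets (mix_point e t0 M) = sets borel" by (rule sets_mix_point[OF M])
  have mass: "emeasure (mix_point e t0 M) A = 1" if "A \<in> sets borel" "t0 \<in> A" "emeasure M A = 1" for A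
  proof -
    have "emeasure (mix_point e t0 M) A = (\<integral>\<^sup>+t. indicator A t \<partial>mix_point e t0 M)"
      using that sets by (simp add: nn_integral_indicator)
    also have "\<dots> = ennreal e + emeasure M A * ennreal (1 - e)"
      using that M e by (simp add: nn_integral_mix_point nn_integral_indicator is_priorD(2))
    finally show ?thesis using that e by (simp add: ennreal_plus[symmetric] del: ennreal_plus)
  qed
  have "emeasure M UNIV = 1"
    using prob_space.emeasure_space_1[OF is_priorD(1)[OF M]] by (simp add: sets_eq_imp_space_eq[OF is_priorD(2)[OF M]])
  then have "prob_space (mix_point e t0 M)"
    using mass[of UNIV] sets_eq_imp_space_eq[OF sets] by (intro prob_spaceI) simp
  then show ?thesis
    using sets mass[of "{0..1}"] M t0 by (simp add: is_prior_def)
qed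

lemma integral_mix_point:
  assumes M: "is_prior M" and e: "e \<in> {0..1}" and t0: "t0 \<in> {0..1}"
    and f: "f \<in> borel_measurable borel" and bound: "\<And>t. t \<in> {0..1} \<Longrightarrow> 0 \<le> f t \<and> f t \<le> C"
  shows "(\<integral>t. f t \<partial>mix_point e t0 M) = e * f t0 + (1 - e) * (\<integral>t. f t \<partial>M)"
proof -
  have as_nn_integral: "(\<integral>\<^sup>+t. ennreal (f t) \<partial>N) = ennreal (\<integral>t. f t \<partial>N)"
    and nonneg: "0 \<le> (\<integral>t. f t \<partial>N)" if N: "is_prior N" for N
  proof -
    have "AE t in N. 0 \<le> f t" using is_priorD(3)[OF N] by (rule AE_mp) (use bound in auto)
    moreover have "integrable N f"
      using bound by (intro integrable_prior_bounded[OF N f, of C]) force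
    ultimately show "(\<integral>\<^sup>+t. ennreal (f t) \<partial>N) = ennreal (\<integral>t. f t \<partial>N)" "0 \<le> (\<integral>t. f t \<partial>N)"
      by (simp_all add: nn_integral_eq_integral integral_nonneg_AE)
  qed
  note N = is_prior_mix_point[OF M e t0]
  have "ennreal (\<integral>t. f t \<partial>mix_point e t0 M)
      = ennreal (f t0) * ennreal e + ennreal (\<integral>t. f t \<partial>M) * ennreal (1 - e)"
    using f by (simp add: as_nn_integral[OF N, symmetric] as_nn_integral[OF M, symmetric]
        nn_integral_mix_point[OF M e])
  also have "\<dots> = ennreal (e * f t0 + (1 - e) * (\<integral>t. f t \<partial>M))"
    using e bound[OF t0] nonneg[OF M]
    by (simp add: ennreal_mult[symmetric] ennreal_plus[symmetric] mult.commute del: ennreal_plus)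
  finally show ?thesis
    using e bound[OF t0] nonneg[OF M] nonneg[OF N] by (subst (asm) ennreal_inj) auto
qed

lemma moments_mix_point:
  assumes M: "is_prior M" and e: "e \<in> {0..1}" and t0: "t0 \<in> {0..1}"
  shows "prob11 (mix_point e t0 M) = e * t0^2 + (1 - e) * prob11 M"
    "prob10 (mix_point e t0 M) = e * (t0 * (1 - t0)) + (1 - e) * prob10 M"
    "prob00 (mix_point e t0 M) = e * (1 - t0)^2 + (1 - e) * prob00 M"
  unfolding prob11_def prob10_def prob00_def
  by (intro integral_mix_point[OF M e t0, where C = 1];
      simp add: power_le_one mult_le_one)+

lemma risk_bayes_decision_mix_point_le:
  assumes L: "latent_information_prior M" and pos: "0 < prob11 M" "0 < prob10 M" "0 < prob00 M"
    and t0: "t0 \<in> {0..1}" and e: "e \<in> {0<..<1}"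
  shows "risk (bayes_decision (mix_point e t0 M)) t0 \<le> (\<integral>t. risk (bayes_decision M) t \<partial>M)"
proof -
  have M: "is_prior M" using L by (simp add: latent_information_prior_def)
  define N where "N = mix_point e t0 M"
  define \<delta> where "\<delta> = bayes_decision N"
  have e': "e \<in> {0..1}" using e by simp
  have N: "is_prior N" unfolding N_def by (rule is_prior_mix_point[OF M e' t0])
  have posN: "0 < prob11 N" "0 < prob10 N" "0 < prob00 N"
    using pos e t0 by (auto simp: N_def moments_mix_point[OF M e' t0] intro!: add_nonneg_pos)
  have \<delta>: "interior_decision \<delta>" unfolding \<delta>_def by (rule interior_bayes_decision[OF posN])
  define V where "V = (\<integral>t. risk (bayes_decision M) t \<partial>M)"
  define W where "W = (\<integral>t. risk \<delta> t \<partial>M)"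
  have cmi_M: "cond_mutual_info M = ennreal V"
    unfolding V_def by (rule cond_mutual_info_eq_bayes_decision[OF M pos])
  have "ennreal V \<le> bayes_risk M \<delta>"
    unfolding cmi_M[symmetric] cond_mutual_info_def
    using interior_decision_in_decisions[OF \<delta>] by (rule INF_lower)
  then have "V \<le> W" using bayes_risk_interior[OF M \<delta>] by (simp add: W_def)
  have "(\<integral>t. risk \<delta> t \<partial>N) = e * risk \<delta> t0 + (1 - e) * W"
    unfolding N_def W_def
    using risk_nonneg[OF \<delta>] abs_risk_le[of _ \<delta>]
    by (intro integral_mix_point[OF M e' t0]) (auto simp: abs_le_iff)
  moreover have "cond_mutual_info N \<le> cond_mutual_info M"
    using L N by (simp add: latent_information_prior_def)
  ultimately have "e * risk \<delta> t0 + (1 - e) * W \<le> V"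
    using cond_mutual_info_eq_bayes_decision[OF N posN] cmi_M bayes_risk_interior(2)[OF M interior_bayes_decision[OF pos]]
    by (simp add: \<delta>_def V_def)
  moreover have "(1 - e) * V \<le> (1 - e) * W" using \<open>V \<le> W\<close> e by (intro mult_left_mono) auto
  ultimately have "e * risk \<delta> t0 \<le> e * V" by (simp add: algebra_simps)
  then show ?thesis using e by (simp add: \<delta>_def N_def V_def)
qed

lemma risk_bayes_decision_le_integral:
  assumes L: "latent_information_prior M" and pos: "0 < prob11 M" "0 < prob10 M" "0 < prob00 M"
    and t0: "t0 \<in> {0..1}"
  shows "risk (bayes_decision M) t0 \<le> (\<integral>t. risk (bayes_decision M) t \<partial>M)"
proof -
  have M: "is_prior M" using L by (simp add: latent_information_prior_def)
  \<comment> \<open>the moments of the mixture, extended affinely to all \<open>e\<close> so that continuity at \<open>0\<close> makes sense\<close>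
  define a b c where "a e = e * t0^2 + (1 - e) * prob11 M"
    and "b e = e * (t0 * (1 - t0)) + (1 - e) * prob10 M"
    and "c e = e * (1 - t0)^2 + (1 - e) * prob00 M" for e
  define F where "F e = risk (b e / (b e + c e), a e / (a e + b e)) t0" for e
  have F_mix: "F e = risk (bayes_decision (mix_point e t0 M)) t0" if "e \<in> {0..1}" for e
    by (simp add: F_def a_def b_def c_def bayes_decision_def moments_mix_point[OF M that t0])
  have "isCont a 0" "isCont b 0" "isCont c 0"
    unfolding a_def b_def c_def by (intro continuous_intros)+
  moreover have "0 < a 0" "0 < b 0" "0 < c 0" using pos by (simp_all add: a_def b_def c_def)
  ultimately have "isCont F 0"
    unfolding F_def risk_def by (auto simp: field_simps intro!: continuous_intros)
  then have "(F \<longlongrightarrow> F 0) (at_right 0)"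
    by (simp add: isCont_def filterlim_at_split)
  moreover have "eventually (\<lambda>e. F e \<le> (\<integral>t. risk (bayes_decision M) t \<partial>M)) (at_right 0)"
    using eventually_at_right_real[OF zero_less_one]
    by eventually_elim (simp add: F_mix risk_bayes_decision_mix_point_le[OF L pos t0])
  ultimately have "F 0 \<le> (\<integral>t. risk (bayes_decision M) t \<partial>M)"
    by (intro tendsto_upperbound) auto
  then show ?thesis by (simp add: F_def a_def b_def c_def bayes_decision_def)
qed

section \<open>Maximizers of the risk\<close>

lemma card_le_2_if_no_increasing_triple:
  fixes T :: "'a :: linorder set"
  assumes no_triple: "\<And>x y z. x \<in> T \<Longrightarrow> y \<in> T \<Longrightarrow> z \<in> T \<Longrightarrow> x < y \<Longrightarrow> y < z \<Longrightarrow> False"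
  shows "finite T \<and> card T \<le> 2"
proof (rule ccontr)
  assume "\<not> (finite T \<and> card T \<le> 2)"
  then obtain B where B: "B \<subseteq> T" "finite B" "card B = 3"
    by (metis infinite_arbitrarily_large not_less_eq_eq numeral_3_eq_3 obtain_subset_with_card_n
        numeral_2_eq_2)
  define xs where "xs = sorted_list_of_set B"
  have len: "length xs = 3" and sorted: "sorted_wrt (<) xs"
    using B by (simp_all add: xs_def)
  have "xs ! i \<in> T" if "i < 3" for i
    using B that len nth_mem[of i xs] by (auto simp: xs_def)
  then show False
    using no_triple[of "xs ! 0" "xs ! 1" "xs ! 2"] sorted len by (simp add: sorted_wrt_iff_nth_less)
qed

lemma Rolle_has_real_derivative:
  fixes f f' :: "real \<Rightarrow> real"
  assumes "a < b" "f a = f b" and deriv: "\<And>x. x \<in> {a..b} \<Longrightarrow> (f has_real_derivative f' x) (at x)"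
  obtains z where "a < z" "z < b" "f' z = 0"
proof -
  have "continuous_on {a..b} f"
    using deriv by (intro continuous_at_imp_continuous_on ballI DERIV_isCont) auto
  from Rolle_deriv[OF assms(1,2) this, of "\<lambda>x v. f' x * v"] deriv
  obtain z where "a < z" "z < b" "(\<lambda>v. f' z * v) = (\<lambda>v. 0)"
    by (auto simp: has_field_derivative_def)
  then show ?thesis using that by (metis mult.right_neutral)
qed

text \<open>This is the shape of the risk on \<open>(0, 1)\<close>. Its second derivative is \<open>1 / (t (1 - t))\<close> plus
  a constant, and each value of \<open>t (1 - t)\<close> is taken at most twice; but three maximizers give
  five critical points and hence, by Rolle, four zeros of the second derivative.\<close>
lemma no_three_interior_maximizers:
  fixes F :: "real \<Rightarrow> real" and \<alpha> \<beta> \<gamma> V x y z :: real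
  assumes F: "\<And>t. t \<in> {0<..<1} \<Longrightarrow>
      F t = t * ln t + (1 - t) * ln (1 - t) + \<alpha> * t^2 + \<beta> * (t * (1 - t)) + \<gamma> * (1 - t)^2"
    and le: "\<And>t. t \<in> {0<..<1} \<Longrightarrow> F t \<le> V"
    and xyz: "0 < x" "x < y" "y < z" "z < 1" and max: "F x = V" "F y = V" "F z = V"
  shows False
proof -
  define G where "G t = t * ln t + (1 - t) * ln (1 - t) + \<alpha> * t^2 + \<beta> * (t * (1 - t)) + \<gamma> * (1 - t)^2"
    for t
  have G_eq_F: "G t = F t" if "t \<in> {0<..<1}" for t using F[OF that] by (simp add: G_def)
  define G' where "G' t = ln t - ln (1 - t) + 2 * \<alpha> * t + \<beta> * (1 - 2 * t) - 2 * \<gamma> * (1 - t)" for t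
  define G'' where "G'' t = 1 / t + 1 / (1 - t) + 2 * (\<alpha> - \<beta> + \<gamma>)" for t
  have dG: "(G has_real_derivative G' t) (at t)" if "t \<in> {0<..<1}" for t
    using that unfolding G_def G'_def
    by (auto intro!: derivative_eq_intros simp: algebra_simps) (simp add: field_simps)
  have dG': "(G' has_real_derivative G'' t) (at t)" if "t \<in> {0<..<1}" for t
    using that unfolding G'_def G''_def
    by (auto intro!: derivative_eq_intros simp: algebra_simps divide_simps)
  have crit: "G' w = 0" if "w \<in> {x, y, z}" for w
  proof (rule DERIV_local_max[OF dG])
    show "0 < min w (1 - w)" using that xyz by auto
    show "\<forall>v. \<bar>w - v\<bar> < min w (1 - w) \<longrightarrow> G v \<le> G w"
      using that xyz max le by (auto simp: abs_less_iff G_eq_F)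
  qed (use that xyz in auto)
  obtain u where u: "x < u" "u < y" "G' u = 0"
    using Rolle_has_real_derivative[of x y G G'] xyz max dG by (auto simp: G_eq_F)
  obtain v where v: "y < v" "v < z" "G' v = 0"
    using Rolle_has_real_derivative[of y z G G'] xyz max dG by (auto simp: G_eq_F)
  obtain q1 where q1: "x < q1" "q1 < u" "G'' q1 = 0"
    using Rolle_has_real_derivative[of x u G' G''] xyz u crit dG' by auto
  obtain q2 where q2: "u < q2" "q2 < y" "G'' q2 = 0"
    using Rolle_has_real_derivative[of u y G' G''] xyz u crit dG' by auto
  obtain q3 where q3: "y < q3" "q3 < v" "G'' q3 = 0"
    using Rolle_has_real_derivative[of y v G' G''] xyz v crit dG' by auto
  have recip: "1 / t + 1 / (1 - t) = 1 / (t * (1 - t))" if "0 < t" "t < 1" for t :: real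
    using that by (simp add: divide_simps)
  have "1 / (q1 * (1 - q1)) = 1 / (q2 * (1 - q2))" "1 / (q2 * (1 - q2)) = 1 / (q3 * (1 - q3))"
    using q1 q2 q3 u v xyz recip[of q1] recip[of q2] recip[of q3] unfolding G''_def by linarith+
  then have "q1 * (1 - q1) = q2 * (1 - q2)" "q2 * (1 - q2) = q3 * (1 - q3)"
    by simp_all
  then have "(q1 - q2) * (q1 + q2 - 1) = 0" "(q2 - q3) * (q2 + q3 - 1) = 0"
    by (simp_all add: algebra_simps)
  then show False using q1 q2 q3 u v by auto
qed

lemma card_interior_maximizers_risk_le_2:
  assumes le: "\<And>t. t \<in> {0..1} \<Longrightarrow> risk \<delta> t \<le> V"
  shows "finite {t \<in> {0<..<1}. risk \<delta> t = V} \<and> card {t \<in> {0<..<1}. risk \<delta> t = V} \<le> 2"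
proof (rule card_le_2_if_no_increasing_triple)
  fix x y z assume xyz: "x \<in> {t \<in> {0<..<1}. risk \<delta> t = V}" "y \<in> {t \<in> {0<..<1}. risk \<delta> t = V}"
    "z \<in> {t \<in> {0<..<1}. risk \<delta> t = V}" "x < y" "y < z"
  have risk: "risk \<delta> t = t * ln t + (1 - t) * ln (1 - t) + (- ln (snd \<delta>)) * t^2
      + (- ln (1 - snd \<delta>) - ln (fst \<delta>)) * (t * (1 - t)) + (- ln (1 - fst \<delta>)) * (1 - t)^2"
    if "t \<in> {0<..<1}" for t
    using that by (simp add: risk_def bin_entropy_def algebra_simps)
  show False
    by (rule no_three_interior_maximizers[OF risk, of V x y z]) (use xyz le in auto)
qed

section \<open>Support of a latent information prior\<close>

lemma (in prob_space) AE_eq_expectation_if_le: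
  fixes f :: "'a \<Rightarrow> real"
  assumes "integrable M f" "AE x in M. f x \<le> expectation f"
  shows "AE x in M. f x = expectation f"
proof -
  have "(\<integral>x. expectation f - f x \<partial>M) = 0"
    using assms(1) by (simp add: prob_space)
  then have "AE x in M. expectation f - f x = 0"
    using assms by (subst integral_nonneg_eq_0_iff_AE[symmetric]) auto
  then show ?thesis by eventually_elim simp
qed

lemma emeasure_risk_maximizers_eq_1:
  assumes L: "latent_information_prior M" and pos: "0 < prob11 M" "0 < prob10 M" "0 < prob00 M"
  shows "emeasure M {t \<in> {0..1}. risk (bayes_decision M) t = (\<integral>t. risk (bayes_decision M) t \<partial>M)} = 1"
proof -
  have M: "is_prior M" using L by (simp add: latent_information_prior_def)
  interpret prob_space M using is_priorD(1)[OF M] .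
  have "AE t in M. risk (bayes_decision M) t = expectation (risk (bayes_decision M))"
    using is_priorD(3)[OF M] integrable_risk[OF M] risk_bayes_decision_le_integral[OF L pos]
    by (intro AE_eq_expectation_if_le) (auto elim: AE_mp)
  with is_priorD(3)[OF M] show ?thesis
    by (intro emeasure_eq_1_AE) (auto simp: is_priorD(2)[OF M] elim: AE_mp)
qed

lemma finite_card_le_if_subset_Un:
  assumes "S \<subseteq> A \<union> T" "finite A" "finite T"
  shows "finite S" "card S \<le> card A + card T"
proof -
  show "finite S" using assms finite_subset by blast
  have "card S \<le> card (A \<union> T)" using assms by (intro card_mono) auto
  also have "\<dots> \<le> card A + card T" by (rule card_Un_le)
  finally show "card S \<le> card A + card T" .
qed

theorem lemma2:
  assumes "latent_information_prior M"
  shows "\<exists>S. finite S \<and> card S \<le> 4 \<and> S \<subseteq> {0..1} \<and> emeasure M S = 1"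
proof -
  have M: "is_prior M" using assms by (simp add: latent_information_prior_def)
  show ?thesis
  proof (cases "prob10 M = 0")
    case True
    then have "emeasure M {0, 1} = 1"
      using prob10_eq_0_iff[OF M] by (intro prob_space.emeasure_eq_1_AE) (auto simp: is_priorD[OF M])
    then show ?thesis by (intro exI[of _ "{0, 1}"]) auto
  next
    case False
    note pos = moments_pos[OF M this]
    define g V where "g = risk (bayes_decision M)" and "V = (\<integral>t. g t \<partial>M)"
    define S T where "S = {t \<in> {0..1}. g t = V}" and "T = {t \<in> {0<..<1}. g t = V}"
    have "emeasure M S = 1"
      using emeasure_risk_maximizers_eq_1[OF assms pos] by (simp add: S_def g_def V_def)
    moreover have "finite T" "card T \<le> 2"
      using card_interior_maximizers_risk_le_2[OF risk_bayes_decision_le_integral[OF assms pos]]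
      by (simp_all add: T_def g_def V_def)
    moreover have "S \<subseteq> {0, 1} \<union> T" by (auto simp: S_def T_def)
    ultimately show ?thesis
      using finite_card_le_if_subset_Un[of S "{0, 1}" T] by (intro exI[of _ S]) (auto simp: S_def)
  qed
qed

end
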